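(* Let $K$ be a number field and let ${\cal Z}_P\subset K^n$ be a finite set of points. Then the radical ideal of $K[x_1,\dots,x_n]$ associated with ${\cal Z}_P$ (the ideal of all polynomials vanishing on ${\cal Z}_P$) is generated by a set of polynomials of the form $$ \hat a_{i_1}\hat a_{i_2}\cdots\hat a_{i_s},\qquad (i_1,\dots,i_s)\in\Gamma_s,\quad s\in\{1,\dots,\bar n\}, $$ for some integer $\bar n>n$, some affine-linear polynomials $\hat a_1,\dots,\hat a_{\bar n}\in K[x_1,\dots,x_n]$ and some sets $\Gamma_s\subseteq\{(i_1,\dots,i_s)\in\{1,\dots,\bar n\}^s: i_1<i_2<\dots<i_s\}$.
   Context: An affine-linear polynomial is one of the form $a_{n+1}+\sum_{i=1}^n a_ix_i$ with coefficients in $K$. *)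

theory Defs
  imports Complex_Main "HOL-Library.Poly_Mapping"
begin

text \<open>Multivariate polynomials: finitely supported maps from monomials
(exponent vectors) to coefficients. Variable x_(i+1) of the
paper is indexed by i here (variables 0..n-1).\<close>

type_synonym 'a mpoly = "(nat \<Rightarrow>\<^sub>0 nat) \<Rightarrow>\<^sub>0 'a"

definition subfield_of_complex :: "complex set \<Rightarrow> bool" where
  "subfield_of_complex K \<longleftrightarrow> 0 \<in> K \<and> 1 \<in> K \<and>
     (\<forall>x\<in>K. \<forall>y\<in>K. x + y \<in> K \<and> x * y \<in> K \<and> x - y \<in> K) \<and>
     (\<forall>x\<in>K. inverse x \<in> K)"

text \<open>A number field, realised (as every number field can be) as a subfield of C
that is finite-dimensional as a vector space over Q.\<close>
definition number_field :: "complex set \<Rightarrow> bool" where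
  "number_field K \<longleftrightarrow> subfield_of_complex K \<and>
     (\<exists>B. finite B \<and> B \<subseteq> K \<and>
        K \<subseteq> {\<Sum>b\<in>B. of_rat (r b) * b | r. True})"

definition poly_ring :: "complex set \<Rightarrow> nat \<Rightarrow> complex mpoly set" where
  "poly_ring K n = {p :: complex mpoly. \<forall>m :: (nat, nat) poly_mapping. m \<in> Poly_Mapping.keys p \<longrightarrow> Poly_Mapping.lookup p m \<in> K \<and> Poly_Mapping.keys m \<subseteq> {..<n}}"

definition mpeval :: "complex mpoly \<Rightarrow> (nat \<Rightarrow> complex) \<Rightarrow> complex" where
  "mpeval p x = (\<Sum>m\<in>Poly_Mapping.keys p. Poly_Mapping.lookup p m * (\<Prod>i\<in>Poly_Mapping.keys m. x i ^ Poly_Mapping.lookup m i))"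

definition points :: "complex set \<Rightarrow> nat \<Rightarrow> (nat \<Rightarrow> complex) set" where
  "points K n = {z. (\<forall>i<n. z i \<in> K) \<and> (\<forall>i\<ge>n. z i = 0)}"

definition affine_linear :: "complex set \<Rightarrow> nat \<Rightarrow> complex mpoly \<Rightarrow> bool" where
  "affine_linear K n p \<longleftrightarrow> (\<exists>c a. c \<in> K \<and> (\<forall>i<n. a i \<in> K) \<and>
     p = Poly_Mapping.single 0 c +
         (\<Sum>i<n. Poly_Mapping.single (Poly_Mapping.single i 1) (a i)))"

definition vanishing_ideal :: "complex set \<Rightarrow> nat \<Rightarrow> (nat \<Rightarrow> complex) set \<Rightarrow> complex mpoly set" where
  "vanishing_ideal K n Z = {p \<in> poly_ring K n. \<forall>z\<in>Z. mpeval p z = 0}"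

definition ideal_gen :: "complex set \<Rightarrow> nat \<Rightarrow> complex mpoly set \<Rightarrow> complex mpoly set" where
  "ideal_gen K n G = {\<Sum>g\<in>F. q g * g | F q. finite F \<and> F \<subseteq> G \<and> (\<forall>g\<in>F. q g \<in> poly_ring K n)}"

end

theory Submission
  imports Defs
begin

(* The vanishing ideal of a single point z is generated by the affine forms x_i - z_i, since
   every p is congruent to the constant p(z) modulo them. For a point z outside a finite set S,
   choosing for every w in S a coordinate where w differs from z yields a product of such forms
   for the points of S that vanishes on S and is a nonzero constant at z; so the ideals of z and
   of S are comaximal and their intersection is their product. By induction, the vanishing ideal
   of distinct points z_1, ..., z_m is generated by the products
   (x_(j_1) - z_1(j_1)) ... (x_(j_m) - z_m(j_m)). Numbering the m n forms x_i - z_t(i) consecutively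
   turns these into products over strictly increasing index lists. *)

abbreviation Const :: "complex \<Rightarrow> complex mpoly" where
  "Const c \<equiv> Poly_Mapping.single 0 c"

abbreviation Var :: "nat \<Rightarrow> complex mpoly" where
  "Var i \<equiv> Poly_Mapping.single (Poly_Mapping.single i 1) 1"

lemma sum_single_lookup:
  "(\<Sum>m\<in>Poly_Mapping.keys p. Poly_Mapping.single m (Poly_Mapping.lookup p m)) = p"
  by (rule poly_mapping_eqI) (simp add: lookup_sum lookup_single when_def in_keys_iff)

lemma mult_poly_mapping_eq_sum_single:
  "(p :: 'b::comm_monoid_add \<Rightarrow>\<^sub>0 'a::comm_semiring_0) * q =
     (\<Sum>m1\<in>Poly_Mapping.keys p. \<Sum>m2\<in>Poly_Mapping.keys q.
        Poly_Mapping.single (m1 + m2) (Poly_Mapping.lookup p m1 * Poly_Mapping.lookup q m2))"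
proof -
  have "p * q = (\<Sum>m1\<in>Poly_Mapping.keys p. Poly_Mapping.single m1 (Poly_Mapping.lookup p m1)) *
      (\<Sum>m2\<in>Poly_Mapping.keys q. Poly_Mapping.single m2 (Poly_Mapping.lookup q m2))"
    by (simp only: sum_single_lookup)
  then show ?thesis
    by (simp add: sum_product mult_single)
qed

definition monomial_eval :: "(nat \<Rightarrow> complex) \<Rightarrow> (nat \<Rightarrow>\<^sub>0 nat) \<Rightarrow> complex" where
  "monomial_eval x m = (\<Prod>i\<in>Poly_Mapping.keys m. x i ^ Poly_Mapping.lookup m i)"

lemma monomial_eval_superset:
  "finite S \<Longrightarrow> Poly_Mapping.keys m \<subseteq> S \<Longrightarrow>
     monomial_eval x m = (\<Prod>i\<in>S. x i ^ Poly_Mapping.lookup m i)"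
  unfolding monomial_eval_def by (rule prod.mono_neutral_left) (auto simp: in_keys_iff)

lemma monomial_eval_add: "monomial_eval x (m1 + m2) = monomial_eval x m1 * monomial_eval x m2"
proof -
  let ?S = "Poly_Mapping.keys m1 \<union> Poly_Mapping.keys m2"
  have "monomial_eval x (m1 + m2) = (\<Prod>i\<in>?S. x i ^ Poly_Mapping.lookup (m1 + m2) i)"
    by (rule monomial_eval_superset) (use keys_add[of m1 m2] in auto)
  then show ?thesis
    by (simp add: lookup_add power_add prod.distrib monomial_eval_superset[of ?S])
qed

lemma monomial_eval_0 [simp]: "monomial_eval x 0 = 1"
  by (simp add: monomial_eval_def)

lemma monomial_eval_single [simp]: "monomial_eval x (Poly_Mapping.single i k) = x i ^ k"
  by (cases "k = 0") (simp_all add: monomial_eval_def)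

lemma mpeval_eq_monomial_eval:
  "mpeval p x = (\<Sum>m\<in>Poly_Mapping.keys p. Poly_Mapping.lookup p m * monomial_eval x m)"
  by (simp add: mpeval_def monomial_eval_def)

lemma mpeval_superset:
  "finite S \<Longrightarrow> Poly_Mapping.keys p \<subseteq> S \<Longrightarrow>
     mpeval p x = (\<Sum>m\<in>S. Poly_Mapping.lookup p m * monomial_eval x m)"
  unfolding mpeval_eq_monomial_eval by (rule sum.mono_neutral_left) (auto simp: in_keys_iff)

lemma mpeval_0 [simp]: "mpeval 0 x = 0"
  by (simp add: mpeval_def)

lemma mpeval_single [simp]: "mpeval (Poly_Mapping.single m c) x = c * monomial_eval x m"
  by (simp add: mpeval_eq_monomial_eval)

lemma mpeval_1 [simp]: "mpeval 1 x = 1"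
  by (metis mpeval_single monomial_eval_0 mult_1 single_one)

lemma mpeval_add: "mpeval (p + q) x = mpeval p x + mpeval q x"
proof -
  let ?S = "Poly_Mapping.keys p \<union> Poly_Mapping.keys q"
  have "mpeval (p + q) x = (\<Sum>m\<in>?S. Poly_Mapping.lookup (p + q) m * monomial_eval x m)"
    by (rule mpeval_superset) (use keys_add[of p q] in auto)
  then show ?thesis
    by (simp add: lookup_add distrib_right sum.distrib mpeval_superset[of ?S])
qed

lemma mpeval_diff: "mpeval (p - q) x = mpeval p x - mpeval q x"
  using mpeval_add[of "p - q" q x] by simp

lemma mpeval_sum: "mpeval (sum f A) x = (\<Sum>a\<in>A. mpeval (f a) x)"
  by (induction A rule: infinite_finite_induct) (auto simp: mpeval_add)

lemma mpeval_mult: "mpeval (p * q) x = mpeval p x * mpeval q x"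
proof -
  have "mpeval (p * q) x = (\<Sum>m1\<in>Poly_Mapping.keys p. \<Sum>m2\<in>Poly_Mapping.keys q.
     (Poly_Mapping.lookup p m1 * monomial_eval x m1) * (Poly_Mapping.lookup q m2 * monomial_eval x m2))"
    by (subst mult_poly_mapping_eq_sum_single) (simp add: mpeval_sum monomial_eval_add mult_ac)
  then show ?thesis
    by (simp add: mpeval_eq_monomial_eval sum_product)
qed

lemma mpeval_prod_list: "mpeval (prod_list ps) x = (\<Prod>p\<leftarrow>ps. mpeval p x)"
  by (induction ps) (auto simp: mpeval_mult)

lemma points_eqI:
  "w \<in> points K n \<Longrightarrow> z \<in> points K n \<Longrightarrow> (\<And>i. i < n \<Longrightarrow> w i = z i) \<Longrightarrow> w = z"
proof
  fix i
  assume "w \<in> points K n" "z \<in> points K n" "\<And>i. i < n \<Longrightarrow> w i = z i"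
  then show "w i = z i"
    by (cases "i < n") (auto simp: points_def)
qed

lemma nth_less_if_set_subset_lessThan: "set js \<subseteq> {..<n} \<Longrightarrow> t < length js \<Longrightarrow> js ! t < n"
  using nth_mem by blast

definition block_index :: "nat \<Rightarrow> nat list \<Rightarrow> nat list" where
  "block_index n js = map (\<lambda>t. t * n + js ! t + 1) [0..<length js]"

lemma length_block_index [simp]: "length (block_index n js) = length js"
  by (simp add: block_index_def)

lemma block_index_le:
  fixes t m i n :: nat
  assumes "t < m" "i < n"
  shows "t * n + i + 1 \<le> m * n"
proof -
  have "Suc t * n \<le> m * n"
    using assms(1) by (intro mult_le_mono1) simp
  then show ?thesis
    using assms(2) by simp
qed

lemma set_block_index: "set js \<subseteq> {..<n} \<Longrightarrow> set (block_index n js) \<subseteq> {1..length js * n}"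
  by (auto simp: block_index_def simp del: One_nat_def intro!: block_index_le nth_less_if_set_subset_lessThan)

lemma nth_block_index: "t < length js \<Longrightarrow> block_index n js ! t = t * n + js ! t + 1"
  by (simp add: block_index_def)

lemma sorted_block_index:
  assumes "set js \<subseteq> {..<n}"
  shows "sorted_wrt (<) (block_index n js)"
proof -
  have "block_index n js ! t1 < block_index n js ! t2" if "t1 < t2" "t2 < length js" for t1 t2
    using block_index_le[of t1 t2 "js ! t1" n] that assms
    by (simp add: nth_block_index nth_less_if_set_subset_lessThan)
  then show ?thesis
    by (simp add: sorted_wrt_iff_nth_less)
qed

lemma map_block_index:
  assumes "length xs = length js" "set js \<subseteq> {..<n}"
    and "\<And>t i. t < length js \<Longrightarrow> i < n \<Longrightarrow> a (t * n + i + 1) = f (xs ! t) i"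
  shows "map a (block_index n js) = map2 f xs js"
  by (rule nth_equalityI)
    (use assms in \<open>auto simp: block_index_def nth_less_if_set_subset_lessThan simp del: One_nat_def\<close>)

(* The trailing index N keeps the lists nonempty when there are no points; it is assigned the
   form 1. *)
definition block_index_lists :: "nat \<Rightarrow> nat \<Rightarrow> nat \<Rightarrow> nat \<Rightarrow> nat list set" where
  "block_index_lists m n N s =
     (if s = Suc m then (\<lambda>js. block_index n js @ [N]) ` {js. length js = m \<and> set js \<subseteq> {..<n}} else {})"

lemma block_index_lists_sorted:
  assumes "m * n < N"
  shows "block_index_lists m n N s \<subseteq> {is. length is = s \<and> set is \<subseteq> {1..N} \<and> sorted_wrt (<) is}"
proof
  fix "is" assume "is \<in> block_index_lists m n N s"
  then obtain js where js: "is = block_index n js @ [N]" "length js = m" "set js \<subseteq> {..<n}" "s = Suc m"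
    by (auto simp: block_index_lists_def split: if_splits)
  then have "set (block_index n js) \<subseteq> {1..m * n}" "sorted_wrt (<) (block_index n js)"
    using set_block_index sorted_block_index by auto
  then show "is \<in> {is. length is = s \<and> set is \<subseteq> {1..N} \<and> sorted_wrt (<) is}"
    using js assms by (fastforce simp: sorted_wrt_append)
qed

lemma UN_block_index_lists:
  assumes "Suc m \<le> N"
  shows "(\<Union>s\<in>{1..N}. f ` block_index_lists m n N s) =
    (\<lambda>js. f (block_index n js @ [N])) ` {js. length js = m \<and> set js \<subseteq> {..<n}}"
proof
  show "(\<Union>s\<in>{1..N}. f ` block_index_lists m n N s) \<subseteq>
      (\<lambda>js. f (block_index n js @ [N])) ` {js. length js = m \<and> set js \<subseteq> {..<n}}"
    by (auto simp: block_index_lists_def split: if_splits)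
  have "f ` block_index_lists m n N (Suc m) \<subseteq> (\<Union>s\<in>{1..N}. f ` block_index_lists m n N s)"
    using assms by (intro UN_upper) simp
  then show "(\<lambda>js. f (block_index n js @ [N])) ` {js. length js = m \<and> set js \<subseteq> {..<n}} \<subseteq>
      (\<Union>s\<in>{1..N}. f ` block_index_lists m n N s)"
    by (simp add: block_index_lists_def image_image)
qed

locale coefficient_field =
  fixes K :: "complex set" and n :: nat
  assumes subfield: "subfield_of_complex K"
begin

lemma zero_in_K: "0 \<in> K" and one_in_K: "1 \<in> K"
  and add_in_K: "x \<in> K \<Longrightarrow> y \<in> K \<Longrightarrow> x + y \<in> K"
  and mult_in_K: "x \<in> K \<Longrightarrow> y \<in> K \<Longrightarrow> x * y \<in> K"
  and diff_in_K: "x \<in> K \<Longrightarrow> y \<in> K \<Longrightarrow> x - y \<in> K"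
  and inverse_in_K: "x \<in> K \<Longrightarrow> inverse x \<in> K"
  using subfield by (auto simp: subfield_of_complex_def)

lemma uminus_in_K: "x \<in> K \<Longrightarrow> - x \<in> K"
  using diff_in_K[OF zero_in_K] by simp

lemma poly_ring_lookup: "p \<in> poly_ring K n \<Longrightarrow> Poly_Mapping.lookup p m \<in> K"
  by (cases "m \<in> Poly_Mapping.keys p") (auto simp: poly_ring_def in_keys_iff zero_in_K)

lemma poly_ring_keys:
  "p \<in> poly_ring K n \<Longrightarrow> m \<in> Poly_Mapping.keys p \<Longrightarrow> Poly_Mapping.keys m \<subseteq> {..<n}"
  by (auto simp: poly_ring_def)

lemma poly_ring_0: "0 \<in> poly_ring K n"
  by (auto simp: poly_ring_def)

lemma poly_ring_single:
  "c \<in> K \<Longrightarrow> Poly_Mapping.keys m \<subseteq> {..<n} \<Longrightarrow> Poly_Mapping.single m c \<in> poly_ring K n"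
  by (auto simp: poly_ring_def)

lemma poly_ring_Const: "c \<in> K \<Longrightarrow> Const c \<in> poly_ring K n"
  by (rule poly_ring_single) auto

lemma poly_ring_1: "1 \<in> poly_ring K n"
  using poly_ring_Const[OF one_in_K] by simp

lemma poly_ring_Var: "i < n \<Longrightarrow> Var i \<in> poly_ring K n"
  by (rule poly_ring_single) (auto simp: one_in_K)

lemma poly_ring_intro:
  "(\<And>m. Poly_Mapping.lookup p m \<in> K) \<Longrightarrow>
   (\<And>m. m \<in> Poly_Mapping.keys p \<Longrightarrow> Poly_Mapping.keys m \<subseteq> {..<n}) \<Longrightarrow> p \<in> poly_ring K n"
  by (simp add: poly_ring_def)

lemma poly_ring_add: "p \<in> poly_ring K n \<Longrightarrow> q \<in> poly_ring K n \<Longrightarrow> p + q \<in> poly_ring K n"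
  by (rule poly_ring_intro)
    (use keys_add[of p q] poly_ring_keys in \<open>auto simp: lookup_add add_in_K poly_ring_lookup\<close>)

lemma poly_ring_diff: "p \<in> poly_ring K n \<Longrightarrow> q \<in> poly_ring K n \<Longrightarrow> p - q \<in> poly_ring K n"
  by (rule poly_ring_intro)
    (use keys_diff[of p q] poly_ring_keys in \<open>auto simp: lookup_minus diff_in_K poly_ring_lookup\<close>)

lemma poly_ring_sum: "(\<And>a. a \<in> A \<Longrightarrow> f a \<in> poly_ring K n) \<Longrightarrow> sum f A \<in> poly_ring K n"
  by (induction A rule: infinite_finite_induct) (auto simp: poly_ring_0 poly_ring_add)

lemma poly_ring_mult:
  assumes "p \<in> poly_ring K n" "q \<in> poly_ring K n"
  shows "p * q \<in> poly_ring K n"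
  unfolding mult_poly_mapping_eq_sum_single[of p q]
proof (intro poly_ring_sum poly_ring_single mult_in_K poly_ring_lookup assms)
  fix m1 m2 assume "m1 \<in> Poly_Mapping.keys p" "m2 \<in> Poly_Mapping.keys q"
  then show "Poly_Mapping.keys (m1 + m2) \<subseteq> {..<n}"
    using poly_ring_keys assms keys_add[of m1 m2] by blast
qed

lemma single_eq_Const_mult_prod_Var:
  "Poly_Mapping.single m c = Const c * (\<Prod>i\<in>Poly_Mapping.keys m. Var i ^ Poly_Mapping.lookup m i)"
proof -
  have Var_power: "Var i ^ k = Poly_Mapping.single (Poly_Mapping.single i k) 1" for i k
    by (induction k) (simp_all add: mult_single flip: single_add)
  have prod_single: "(\<Prod>i\<in>A. Poly_Mapping.single (g i) (1::complex)) = Poly_Mapping.single (\<Sum>i\<in>A. g i) 1"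
    for A and g :: "nat \<Rightarrow> nat \<Rightarrow>\<^sub>0 nat"
    by (induction A rule: infinite_finite_induct) (auto simp: mult_single)
  have "(\<Prod>i\<in>Poly_Mapping.keys m. Var i ^ Poly_Mapping.lookup m i) = Poly_Mapping.single m 1"
    by (simp only: Var_power prod_single sum_single_lookup)
  then show ?thesis
    by (simp add: mult_single)
qed

lemma poly_ring_induct [consumes 1, case_names Const Var add mult]:
  assumes "p \<in> poly_ring K n"
    and Const: "\<And>c. c \<in> K \<Longrightarrow> P (Const c)"
    and Var: "\<And>i. i < n \<Longrightarrow> P (Var i)"
    and add: "\<And>p q. p \<in> poly_ring K n \<Longrightarrow> q \<in> poly_ring K n \<Longrightarrow>
      P p \<Longrightarrow> P q \<Longrightarrow> P (p + q)"
    and mult: "\<And>p q. p \<in> poly_ring K n \<Longrightarrow> q \<in> poly_ring K n \<Longrightarrow>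
      P p \<Longrightarrow> P q \<Longrightarrow> P (p * q)"
  shows "P p"
proof -
  let ?Q = "\<lambda>p. p \<in> poly_ring K n \<and> P p"
  have Q_Const: "?Q (Const c)" if "c \<in> K" for c
    using that Const poly_ring_Const by blast
  have Q_Var: "?Q (Var i)" if "i < n" for i
    using that Var poly_ring_Var by blast
  have Q_add: "?Q p \<Longrightarrow> ?Q q \<Longrightarrow> ?Q (p + q)" for p q
    by (simp add: poly_ring_add add)
  have Q_mult: "?Q p \<Longrightarrow> ?Q q \<Longrightarrow> ?Q (p * q)" for p q
    by (simp add: poly_ring_mult mult)
  have Q_0: "?Q 0" and Q_1: "?Q 1"
    using Q_Const[OF zero_in_K] Q_Const[OF one_in_K] by simp_all
  have Q_sum: "?Q (sum f A)" if "\<And>a. a \<in> A \<Longrightarrow> ?Q (f a)" for f :: "'b \<Rightarrow> complex mpoly" and A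
    using that by (induction A rule: infinite_finite_induct) (auto simp: Q_0 intro!: Q_add)
  have Q_prod: "?Q (prod f A)" if "\<And>a. a \<in> A \<Longrightarrow> ?Q (f a)" for f :: "'b \<Rightarrow> complex mpoly" and A
    using that by (induction A rule: infinite_finite_induct) (auto simp: Q_1 intro!: Q_mult)
  have Q_power: "?Q q \<Longrightarrow> ?Q (q ^ k)" for q k
    by (induction k) (auto simp: Q_1 intro!: Q_mult)
  have Q_monomial: "?Q (Poly_Mapping.single m c)" if "c \<in> K" "Poly_Mapping.keys m \<subseteq> {..<n}" for m c
    unfolding single_eq_Const_mult_prod_Var[of m c] using that
    by (intro Q_mult Q_prod Q_power Q_Const Q_Var) auto
  have "?Q (\<Sum>m\<in>Poly_Mapping.keys p. Poly_Mapping.single m (Poly_Mapping.lookup p m))"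
    using assms(1) by (intro Q_sum Q_monomial poly_ring_lookup poly_ring_keys)
  then show ?thesis
    by (simp add: sum_single_lookup)
qed

lemma mpeval_in_K: "p \<in> poly_ring K n \<Longrightarrow> z \<in> points K n \<Longrightarrow> mpeval p z \<in> K"
  by (induction p rule: poly_ring_induct) (auto simp: mpeval_add mpeval_mult add_in_K mult_in_K points_def)

lemma ideal_gen_intro:
  "finite F \<Longrightarrow> F \<subseteq> G \<Longrightarrow> (\<And>g. g \<in> F \<Longrightarrow> q g \<in> poly_ring K n) \<Longrightarrow>
     (\<Sum>g\<in>F. q g * g) \<in> ideal_gen K n G"
  unfolding ideal_gen_def by blast

lemma ideal_gen_elim:
  assumes "p \<in> ideal_gen K n G"
  obtains F q where "finite F" "F \<subseteq> G" "\<forall>g\<in>F. q g \<in> poly_ring K n"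
    "p = (\<Sum>g\<in>F. q g * g)"
  using assms unfolding ideal_gen_def by blast

lemma ideal_gen_0: "0 \<in> ideal_gen K n G"
  using ideal_gen_intro[of "{}"] by simp

lemma ideal_gen_generator: "g \<in> G \<Longrightarrow> g \<in> ideal_gen K n G"
  using ideal_gen_intro[of "{g}" G "\<lambda>_. 1"] by (simp add: poly_ring_1)

lemma ideal_gen_add:
  assumes "p \<in> ideal_gen K n G" "q \<in> ideal_gen K n G"
  shows "p + q \<in> ideal_gen K n G"
proof -
  obtain F1 q1 where F1: "finite F1" "F1 \<subseteq> G" "\<forall>g\<in>F1. q1 g \<in> poly_ring K n"
    and p: "p = (\<Sum>g\<in>F1. q1 g * g)"
    using assms(1) by (rule ideal_gen_elim)
  obtain F2 q2 where F2: "finite F2" "F2 \<subseteq> G" "\<forall>g\<in>F2. q2 g \<in> poly_ring K n"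
    and q: "q = (\<Sum>g\<in>F2. q2 g * g)"
    using assms(2) by (rule ideal_gen_elim)
  define r1 where "r1 g = (if g \<in> F1 then q1 g else 0)" for g
  define r2 where "r2 g = (if g \<in> F2 then q2 g else 0)" for g
  have "p = (\<Sum>g\<in>F1 \<union> F2. r1 g * g)"
    unfolding p by (rule sum.mono_neutral_cong_left) (auto simp: F1 F2 r1_def)
  moreover have "q = (\<Sum>g\<in>F1 \<union> F2. r2 g * g)"
    unfolding q by (rule sum.mono_neutral_cong_left) (auto simp: F1 F2 r2_def)
  ultimately have "p + q = (\<Sum>g\<in>F1 \<union> F2. (r1 g + r2 g) * g)"
    by (simp add: distrib_right sum.distrib)
  also have "\<dots> \<in> ideal_gen K n G"
    using F1 F2 by (intro ideal_gen_intro) (auto simp: r1_def r2_def poly_ring_add poly_ring_0)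
  finally show ?thesis .
qed

lemma ideal_gen_mult_left:
  assumes "r \<in> poly_ring K n" "p \<in> ideal_gen K n G"
  shows "r * p \<in> ideal_gen K n G"
proof -
  obtain F q where F: "finite F" "F \<subseteq> G" "\<forall>g\<in>F. q g \<in> poly_ring K n"
    and p: "p = (\<Sum>g\<in>F. q g * g)"
    using assms(2) by (rule ideal_gen_elim)
  have "r * p = (\<Sum>g\<in>F. (r * q g) * g)"
    by (simp add: p sum_distrib_left mult.assoc)
  also have "\<dots> \<in> ideal_gen K n G"
    using F assms(1) by (intro ideal_gen_intro) (auto simp: poly_ring_mult)
  finally show ?thesis .
qed

lemma ideal_gen_sum: "(\<And>a. a \<in> A \<Longrightarrow> f a \<in> ideal_gen K n G) \<Longrightarrow> sum f A \<in> ideal_gen K n G"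
  by (induction A rule: infinite_finite_induct) (auto simp: ideal_gen_0 ideal_gen_add)

lemma ideal_gen_minimal:
  assumes "0 \<in> I" "\<And>p q. p \<in> I \<Longrightarrow> q \<in> I \<Longrightarrow> p + q \<in> I"
    "\<And>r p. r \<in> poly_ring K n \<Longrightarrow> p \<in> I \<Longrightarrow> r * p \<in> I" "G \<subseteq> I"
  shows "ideal_gen K n G \<subseteq> I"
proof
  fix p assume "p \<in> ideal_gen K n G"
  then obtain F q where "finite F" "F \<subseteq> G" "\<forall>g\<in>F. q g \<in> poly_ring K n"
    and p: "p = (\<Sum>g\<in>F. q g * g)"
    by (rule ideal_gen_elim)
  then show "p \<in> I"
    unfolding p by (induction F rule: finite_induct) (use assms in auto)
qed

lemma ideal_gen_subset_poly_ring: "G \<subseteq> poly_ring K n \<Longrightarrow> ideal_gen K n G \<subseteq> poly_ring K n"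
  by (rule ideal_gen_minimal) (auto simp: poly_ring_0 poly_ring_add poly_ring_mult)

lemma ideal_gen_1: "ideal_gen K n {1} = poly_ring K n"
proof
  show "ideal_gen K n {1} \<subseteq> poly_ring K n"
    by (rule ideal_gen_subset_poly_ring) (simp add: poly_ring_1)
  show "poly_ring K n \<subseteq> ideal_gen K n {1}"
    using ideal_gen_mult_left[OF _ ideal_gen_generator[of 1 "{1}"]] by auto
qed

lemma ideal_gen_subset_vanishing_ideal:
  "G \<subseteq> vanishing_ideal K n Z \<Longrightarrow> ideal_gen K n G \<subseteq> vanishing_ideal K n Z"
  by (rule ideal_gen_minimal)
    (auto simp: vanishing_ideal_def poly_ring_0 poly_ring_add poly_ring_mult mpeval_add mpeval_mult)

lemma mult_mem_ideal_gen_products: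
  assumes "p \<in> ideal_gen K n G" "q \<in> ideal_gen K n H"
  shows "p * q \<in> ideal_gen K n {g * h | g h. g \<in> G \<and> h \<in> H}"
proof -
  obtain F1 q1 where F1: "finite F1" "F1 \<subseteq> G" "\<forall>g\<in>F1. q1 g \<in> poly_ring K n"
    and p: "p = (\<Sum>g\<in>F1. q1 g * g)"
    using assms(1) by (rule ideal_gen_elim)
  obtain F2 q2 where F2: "finite F2" "F2 \<subseteq> H" "\<forall>h\<in>F2. q2 h \<in> poly_ring K n"
    and q: "q = (\<Sum>h\<in>F2. q2 h * h)"
    using assms(2) by (rule ideal_gen_elim)
  have "p * q = (\<Sum>g\<in>F1. \<Sum>h\<in>F2. (q1 g * q2 h) * (g * h))"
    by (simp add: p q sum_product mult_ac)
  also have "\<dots> \<in> ideal_gen K n {g * h | g h. g \<in> G \<and> h \<in> H}"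
    using F1 F2 by (intro ideal_gen_sum ideal_gen_mult_left poly_ring_mult ideal_gen_generator) blast+
  finally show ?thesis .
qed

lemma mem_ideal_gen_products_if_comaximal:
  assumes "u \<in> ideal_gen K n H" "1 - u \<in> ideal_gen K n G"
    and "p \<in> ideal_gen K n G" "p \<in> ideal_gen K n H"
  shows "p \<in> ideal_gen K n {g * h | g h. g \<in> G \<and> h \<in> H}"
proof -
  have "p = p * u + (1 - u) * p"
    by (simp add: algebra_simps)
  also have "\<dots> \<in> ideal_gen K n {g * h | g h. g \<in> G \<and> h \<in> H}"
    using assms by (intro ideal_gen_add mult_mem_ideal_gen_products)
  finally show ?thesis .
qed

definition max_ideal_gens :: "(nat \<Rightarrow> complex) \<Rightarrow> complex mpoly set" where
  "max_ideal_gens z = {Var i - Const (z i) | i. i < n}"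

lemma max_ideal_gens_subset_poly_ring: "z \<in> points K n \<Longrightarrow> max_ideal_gens z \<subseteq> poly_ring K n"
  by (auto simp: max_ideal_gens_def points_def simp del: One_nat_def
      intro!: poly_ring_diff poly_ring_Var poly_ring_Const)

lemma minus_Const_mpeval_mem_max_ideal:
  assumes "z \<in> points K n" "p \<in> poly_ring K n"
  shows "p - Const (mpeval p z) \<in> ideal_gen K n (max_ideal_gens z)"
  using assms(2)
proof (induction p rule: poly_ring_induct)
  case (Const c)
  then show ?case by (simp add: ideal_gen_0)
next
  case (Var i)
  then show ?case by (auto simp: max_ideal_gens_def intro!: ideal_gen_generator)
next
  case (add p q)
  have "p + q - Const (mpeval (p + q) z) = (p - Const (mpeval p z)) + (q - Const (mpeval q z))"
    by (simp add: mpeval_add single_add)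
  then show ?case using add.IH by (simp only: ideal_gen_add)
next
  case (mult p q)
  have "p * q - Const (mpeval (p * q) z) =
      q * (p - Const (mpeval p z)) + Const (mpeval p z) * (q - Const (mpeval q z))"
    by (simp add: mpeval_mult mult_single algebra_simps)
  moreover have "Const (mpeval p z) \<in> poly_ring K n"
    using mult.hyps assms(1) by (intro poly_ring_Const mpeval_in_K)
  ultimately show ?case using mult by (simp add: ideal_gen_add ideal_gen_mult_left)
qed

lemma vanishing_ideal_point:
  assumes "z \<in> points K n" "p \<in> vanishing_ideal K n {z}"
  shows "p \<in> ideal_gen K n (max_ideal_gens z)"
  using assms minus_Const_mpeval_mem_max_ideal[of z p] by (simp add: vanishing_ideal_def)

definition max_ideal_products :: "(nat \<Rightarrow> complex) list \<Rightarrow> complex mpoly set" where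
  "max_ideal_products zs = {prod_list (map2 (\<lambda>z i. Var i - Const (z i)) zs js) | js.
     length js = length zs \<and> set js \<subseteq> {..<n}}"

lemma max_ideal_products_Nil: "max_ideal_products [] = {1}"
  by (auto simp: max_ideal_products_def)

lemma max_ideal_products_Cons:
  "max_ideal_products (z # zs) = {g * h | g h. g \<in> max_ideal_gens z \<and> h \<in> max_ideal_products zs}"
proof safe
  fix p assume "p \<in> max_ideal_products (z # zs)"
  then obtain i js where "p = (Var i - Const (z i)) * prod_list (map2 (\<lambda>z i. Var i - Const (z i)) zs js)"
    "i < n" "length js = length zs" "set js \<subseteq> {..<n}"
    by (auto simp: max_ideal_products_def length_Suc_conv)
  then show "\<exists>g h. p = g * h \<and> g \<in> max_ideal_gens z \<and> h \<in> max_ideal_products zs"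
    by (auto simp: max_ideal_gens_def max_ideal_products_def)
next
  fix g h assume "g \<in> max_ideal_gens z" "h \<in> max_ideal_products zs"
  then obtain i js where "i < n" "g = Var i - Const (z i)"
    "h = prod_list (map2 (\<lambda>z i. Var i - Const (z i)) zs js)" "length js = length zs" "set js \<subseteq> {..<n}"
    by (auto simp: max_ideal_gens_def max_ideal_products_def)
  then show "g * h \<in> max_ideal_products (z # zs)"
    unfolding max_ideal_products_def by (intro CollectI exI[of _ "i # js"]) auto
qed

lemma max_ideal_products_subset_poly_ring:
  "set zs \<subseteq> points K n \<Longrightarrow> max_ideal_products zs \<subseteq> poly_ring K n"
  by (induction zs)
    (auto simp: max_ideal_products_Nil max_ideal_products_Cons poly_ring_1
      intro!: poly_ring_mult dest!: max_ideal_gens_subset_poly_ring)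

lemma separating_element:
  assumes "z \<in> points K n" "set zs \<subseteq> points K n" "z \<notin> set zs"
  obtains u where "u \<in> ideal_gen K n (max_ideal_products zs)" "mpeval u z = 1"
proof -
  have "\<exists>i<n. w i \<noteq> z i" if "w \<in> set zs" for w
    using that assms points_eqI[of w _ _ z] by blast
  then obtain coord where coord: "\<And>w. w \<in> set zs \<Longrightarrow> coord w < n \<and> w (coord w) \<noteq> z (coord w)"
    by metis
  define h where "h = prod_list (map2 (\<lambda>z i. Var i - Const (z i)) zs (map coord zs))"
  have h: "h \<in> max_ideal_products zs"
    unfolding h_def max_ideal_products_def using coord by (auto intro!: exI[of _ "map coord zs"])
  define c where "c = mpeval h z"
  have "c = (\<Prod>w\<leftarrow>zs. z (coord w) - w (coord w))"
    by (simp add: c_def h_def mpeval_prod_list mpeval_diff zip_map2 zip_same_conv_map o_def)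
  then have "c \<noteq> 0"
    by (auto simp: prod_list_zero_iff dest!: coord)
  have "c \<in> K"
    unfolding c_def using h max_ideal_products_subset_poly_ring[OF assms(2)] assms(1)
    by (blast intro: mpeval_in_K)
  show ?thesis
  proof (rule that)
    show "Const (inverse c) * h \<in> ideal_gen K n (max_ideal_products zs)"
      using \<open>c \<in> K\<close> h by (intro ideal_gen_mult_left poly_ring_Const inverse_in_K ideal_gen_generator)
    show "mpeval (Const (inverse c) * h) z = 1"
      using \<open>c \<noteq> 0\<close> by (simp add: mpeval_mult flip: c_def)
  qed
qed

lemma vanishing_ideal_Cons:
  assumes z: "z \<in> points K n" "z \<notin> set zs" and zs: "set zs \<subseteq> points K n"
    and IH: "vanishing_ideal K n (set zs) = ideal_gen K n (max_ideal_products zs)"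
  shows "vanishing_ideal K n (set (z # zs)) = ideal_gen K n (max_ideal_products (z # zs))"
proof
  show "ideal_gen K n (max_ideal_products (z # zs)) \<subseteq> vanishing_ideal K n (set (z # zs))"
  proof (rule ideal_gen_subset_vanishing_ideal, unfold max_ideal_products_Cons, safe)
    fix g h assume g: "g \<in> max_ideal_gens z" and h: "h \<in> max_ideal_products zs"
    then have "g \<in> poly_ring K n" "mpeval g z = 0" "h \<in> vanishing_ideal K n (set zs)"
      using max_ideal_gens_subset_poly_ring[OF z(1)] IH ideal_gen_generator
      by (auto simp: max_ideal_gens_def mpeval_diff)
    then show "g * h \<in> vanishing_ideal K n (set (z # zs))"
      by (auto simp: vanishing_ideal_def poly_ring_mult mpeval_mult)
  qed
next
  show "vanishing_ideal K n (set (z # zs)) \<subseteq> ideal_gen K n (max_ideal_products (z # zs))"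
  proof
    fix p assume p: "p \<in> vanishing_ideal K n (set (z # zs))"
    obtain u where u: "u \<in> ideal_gen K n (max_ideal_products zs)" "mpeval u z = 1"
      using separating_element[OF z(1) zs z(2)] .
    have "u \<in> poly_ring K n"
      using u(1) ideal_gen_subset_poly_ring[OF max_ideal_products_subset_poly_ring[OF zs]] by blast
    then have "1 - u \<in> ideal_gen K n (max_ideal_gens z)"
      using vanishing_ideal_point[OF z(1)] u(2)
      by (simp add: vanishing_ideal_def poly_ring_diff poly_ring_1 mpeval_diff)
    moreover have "p \<in> ideal_gen K n (max_ideal_gens z)" "p \<in> ideal_gen K n (max_ideal_products zs)"
      using p vanishing_ideal_point[OF z(1)] IH by (auto simp: vanishing_ideal_def)
    ultimately show "p \<in> ideal_gen K n (max_ideal_products (z # zs))"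
      unfolding max_ideal_products_Cons by (rule mem_ideal_gen_products_if_comaximal[OF u(1)])
  qed
qed

lemma vanishing_ideal_eq_ideal_gen_max_ideal_products:
  assumes "distinct zs" "set zs \<subseteq> points K n"
  shows "vanishing_ideal K n (set zs) = ideal_gen K n (max_ideal_products zs)"
  using assms
proof (induction zs)
  case Nil
  then show ?case
    by (simp add: max_ideal_products_Nil ideal_gen_1 vanishing_ideal_def)
next
  case (Cons z zs)
  then show ?case
    by (intro vanishing_ideal_Cons) auto
qed

lemma affine_linear_Var_minus_Const:
  assumes "i < n" "v \<in> K"
  shows "affine_linear K n (Var i - Const v)"
proof -
  have "(\<Sum>j<n. Poly_Mapping.single (Poly_Mapping.single j 1) (if j = i then 1 else 0)) = Var i"
    using assms(1) by (simp add: if_distrib[of "Poly_Mapping.single _"] sum.delta cong: if_cong)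
  then have "Var i - Const v =
      Const (- v) + (\<Sum>j<n. Poly_Mapping.single (Poly_Mapping.single j 1) (if j = i then 1 else 0))"
    by (simp add: single_uminus)
  then show ?thesis
    unfolding affine_linear_def using assms(2) zero_in_K one_in_K uminus_in_K
    by (intro exI[of _ "- v"] exI[of _ "\<lambda>j. if j = i then 1 else 0"]) auto
qed

lemma affine_linear_1: "affine_linear K n 1"
  unfolding affine_linear_def using zero_in_K one_in_K
  by (intro exI[of _ 1] exI[of _ "\<lambda>_. 0"]) auto

(* The form x_i - z_t(i) for the t-th point z_t gets the index t n + i + 1. *)
definition enum_forms :: "(nat \<Rightarrow> complex) list \<Rightarrow> nat \<Rightarrow> complex mpoly" where
  "enum_forms zs k = (if k \<in> {1..length zs * n}
     then Var ((k - 1) mod n) - Const ((zs ! ((k - 1) div n)) ((k - 1) mod n)) else 1)"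

lemma enum_forms_block:
  "t < length zs \<Longrightarrow> i < n \<Longrightarrow> enum_forms zs (t * n + i + 1) = Var i - Const ((zs ! t) i)"
  using block_index_le[of t "length zs" i n] by (simp add: enum_forms_def)

lemma affine_linear_enum_forms:
  assumes "set zs \<subseteq> points K n"
  shows "affine_linear K n (enum_forms zs k)"
proof (cases "k \<in> {1..length zs * n}")
  case True
  then have "n > 0"
    by (cases n) auto
  define t i where "t = (k - 1) div n" and "i = (k - 1) mod n"
  have "t < length zs"
    using True \<open>n > 0\<close> by (auto simp: t_def div_less_iff_less_mult)
  have "i < n" "k = t * n + i + 1"
    using True \<open>n > 0\<close> by (auto simp: t_def i_def)
  have "(zs ! t) i \<in> K"
    using \<open>t < length zs\<close> \<open>i < n\<close> assms nth_mem[of t zs] unfolding points_def by blast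
  then show ?thesis
    using enum_forms_block[OF \<open>t < length zs\<close> \<open>i < n\<close>] \<open>i < n\<close> \<open>k = _\<close>
    by (simp only: affine_linear_Var_minus_Const)
next
  case False
  show ?thesis
    unfolding enum_forms_def if_not_P[OF False] by (rule affine_linear_1)
qed

lemma prod_enum_forms_block_index:
  assumes "length js = length zs" "set js \<subseteq> {..<n}" "length zs * n < N"
  shows "prod_list (map (enum_forms zs) (block_index n js @ [N])) =
    prod_list (map2 (\<lambda>z i. Var i - Const (z i)) zs js)"
  using map_block_index[of zs js n "enum_forms zs"] assms enum_forms_block
  by (simp add: enum_forms_def)

lemma UN_block_index_lists_enum_forms:
  assumes "length zs * n < N" "Suc (length zs) \<le> N"
  shows "(\<Union>s\<in>{1..N}. (\<lambda>is. prod_list (map (enum_forms zs) is)) ` block_index_lists (length zs) n N s) =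
    max_ideal_products zs"
  unfolding UN_block_index_lists[OF assms(2)] max_ideal_products_def
  using prod_enum_forms_block_index[OF _ _ assms(1)] by auto

end

theorem lemma4:
  fixes K :: "complex set" and n :: nat and Z :: "(nat \<Rightarrow> complex) set"
  assumes "number_field K"
    and "finite Z"
    and "Z \<subseteq> points K n"
  shows "\<exists>nbar::nat. nbar > n \<and>
    (\<exists>a :: nat \<Rightarrow> complex mpoly. (\<forall>i\<in>{1..nbar}. affine_linear K n (a i)) \<and>
      (\<exists>\<Gamma> :: nat \<Rightarrow> nat list set.
         (\<forall>s\<in>{1..nbar}. \<Gamma> s \<subseteq> {is. length is = s \<and> set is \<subseteq> {1..nbar} \<and> sorted_wrt (<) is}) \<and>
         vanishing_ideal K n Z =
           ideal_gen K n (\<Union>s\<in>{1..nbar}. (\<lambda>is. prod_list (map a is)) ` \<Gamma> s)))"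
proof -
  interpret coefficient_field K n
    using assms(1) by unfold_locales (simp add: number_field_def)
  obtain zs where zs: "set zs = Z" "distinct zs"
    using finite_distinct_list[OF assms(2)] by blast
  define m where "m = length zs"
  define nbar where "nbar = m * n + m + n + 1"
  have "vanishing_ideal K n Z = ideal_gen K n (max_ideal_products zs)"
    using vanishing_ideal_eq_ideal_gen_max_ideal_products[OF zs(2)] assms(3) zs(1) by simp
  also have "max_ideal_products zs =
      (\<Union>s\<in>{1..nbar}. (\<lambda>is. prod_list (map (enum_forms zs) is)) ` block_index_lists m n nbar s)"
    unfolding m_def by (rule UN_block_index_lists_enum_forms[symmetric]) (simp_all add: nbar_def m_def)
  finally show ?thesis
    using affine_linear_enum_forms[of zs] block_index_lists_sorted[of m n nbar] assms(3) zs(1)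
    by (intro exI[of _ nbar] exI[of _ "enum_forms zs"] exI[of _ "block_index_lists m n nbar"] conjI ballI)
      (simp_all add: nbar_def)
qed

end
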